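(* There is an absolute constant $C$ such that for all $x\ge0$, $s>0$, $\sigma\in(1/2,1)$ and $\rho\ge1$, with $T=T(s,\sigma)$ and $F_\pm$ as in the context, \[\sup_{0<t\le T}|F_\pm(t)|\le C(s+1)\qquad\text{and}\qquad\|F_\pm\|_{v(\rho),(0,T]}\le C(s+1),\] where the variation is taken in the variable $t$.
   Context: Fix $x\ge0$, $s>0$, $\sigma\in(1/2,1)$. Let $Q_s(t)=x(e^t-1)-s\sqrt{e^{2t}-1}$ and $T=T(s,\sigma)=\sup\{t\in(0,1]:\ Q_s(t)<\sigma/(1+x)\}$. For $0<t\le1$ define \[F_\pm(t)=\frac{\bigl|x(e^t-1)\pm s\sqrt{e^{2t}-1}\bigr|\wedge\frac{\sigma}{1+x}}{\sqrt{1-e^{-2t}}},\] where $a\wedge b=\min(a,b)$. For $1\le\rho<\infty$ and an interval $I$, $\|\phi\|_{v(\rho),I}=\sup(\sum_{i=1}^n|\phi(t_i)-\phi(t_{i-1})|^\rho)^{1/\rho}$ over finite increasing sequences in $I$. *)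

theory Defs
  imports "HOL-Analysis.Analysis"
begin

definition Qs :: "real \<Rightarrow> real \<Rightarrow> real \<Rightarrow> real" where
  "Qs x s t = x * (exp t - 1) - s * sqrt (exp (2*t) - 1)"

definition Tsig :: "real \<Rightarrow> real \<Rightarrow> real \<Rightarrow> real" where
  "Tsig x s \<sigma> = Sup {t \<in> {0<..1}. Qs x s t < \<sigma> / (1 + x)}"

definition Fplus :: "real \<Rightarrow> real \<Rightarrow> real \<Rightarrow> real \<Rightarrow> real" where
  "Fplus x s \<sigma> t =
     min \<bar>x * (exp t - 1) + s * sqrt (exp (2*t) - 1)\<bar> (\<sigma> / (1 + x)) / sqrt (1 - exp (-2*t))"

definition Fminus :: "real \<Rightarrow> real \<Rightarrow> real \<Rightarrow> real \<Rightarrow> real" where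
  "Fminus x s \<sigma> t =
     min \<bar>x * (exp t - 1) - s * sqrt (exp (2*t) - 1)\<bar> (\<sigma> / (1 + x)) / sqrt (1 - exp (-2*t))"

definition pvar :: "real \<Rightarrow> real set \<Rightarrow> (real \<Rightarrow> real) \<Rightarrow> ereal" where
  "pvar \<rho> I \<phi> = (SUP p \<in> {(n, t). (\<forall>i\<le>n. t i \<in> I) \<and> (\<forall>i<n. t i < t (Suc i))}.
       ereal ((\<Sum>i\<in>{1..fst p}. \<bar>\<phi> (snd p i) - \<phi> (snd p (i - 1))\<bar> powr \<rho>) powr (1 / \<rho>)))"

end

theory Submission
  imports Defs
begin

text \<open>Dividing numerator and cap by sqrt(1 - e^(-2t)), and using
  sqrt(e^(2t) - 1) = e^t sqrt(1 - e^(-2t)), gives F_\<plusminus>(t) = min |P(t) \<plusminus> s e^t| D(t) with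
  P = \<open>drift_ratio x\<close> nondecreasing and D = \<open>cap_ratio x \<sigma>\<close> nonincreasing. On (0,1] one has
  P D \<le> 3, so min P D \<le> 2 and F_\<plusminus> \<le> 2 + 3s; the only property of T used is T \<le> 1.
  As (a, b, c) \<mapsto> min |a - b| c is 1-Lipschitz in each argument, the total variation of
  F_\<plusminus> is at most the sum of the total increments of three bounded monotone functions
  (after truncating P), and for \<rho> \<ge> 1 the \<rho>-variation is at most the total variation.\<close>

lemma sum_powr_root_le_sum:
  fixes d :: "'a \<Rightarrow> real"
  assumes "1 \<le> \<rho>" and "finite A" and nonneg: "\<And>i. i \<in> A \<Longrightarrow> 0 \<le> d i"
  shows "(\<Sum>i\<in>A. d i powr \<rho>) powr (1/\<rho>) \<le> (\<Sum>i\<in>A. d i)"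
proof -
  define S where "S = (\<Sum>i\<in>A. d i)"
  have "0 \<le> S" unfolding S_def using nonneg by (simp add: sum_nonneg)
  have term_le: "d i powr \<rho> \<le> d i * S powr (\<rho> - 1)" if "i \<in> A" for i
  proof -
    have "d i \<le> S" unfolding S_def using assms that by (intro member_le_sum) auto
    then have "d i powr (\<rho> - 1) \<le> S powr (\<rho> - 1)"
      using assms that by (intro powr_mono2) auto
    moreover have "d i powr \<rho> = d i * d i powr (\<rho> - 1)"
      using nonneg[OF that] by (cases "d i = 0") (simp_all add: powr_mult_base)
    ultimately show ?thesis
      using nonneg[OF that] by (simp add: mult_left_mono)
  qed
  have "(\<Sum>i\<in>A. d i powr \<rho>) \<le> (\<Sum>i\<in>A. d i * S powr (\<rho> - 1))"
    using term_le by (rule sum_mono)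
  also have "\<dots> = S powr \<rho>"
    using \<open>0 \<le> S\<close> assms by (cases "S = 0") (auto simp: S_def powr_mult_base sum_distrib_right[symmetric])
  finally have "(\<Sum>i\<in>A. d i powr \<rho>) powr (1/\<rho>) \<le> (S powr \<rho>) powr (1/\<rho>)"
    using assms by (intro powr_mono2) (auto intro: sum_nonneg)
  also have "\<dots> = S" using assms \<open>0 \<le> S\<close> by (simp add: powr_powr)
  finally show ?thesis unfolding S_def .
qed

lemma pvar_le_of_sum_abs_diff_le:
  assumes "1 \<le> \<rho>"
    and "\<And>n t. (\<And>i. i \<le> n \<Longrightarrow> t i \<in> I) \<Longrightarrow> (\<And>i. i < n \<Longrightarrow> t i < t (Suc i)) \<Longrightarrow>
      (\<Sum>i=1..n. \<bar>\<phi> (t i) - \<phi> (t (i - 1))\<bar>) \<le> B"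
  shows "pvar \<rho> I \<phi> \<le> ereal B"
  unfolding pvar_def
proof (rule SUP_least)
  fix p assume "p \<in> {(n, t). (\<forall>i\<le>n. t i \<in> I) \<and> (\<forall>i<n. t i < t (Suc i))}"
  then obtain n t where p: "p = (n, t)" and "\<And>i. i \<le> n \<Longrightarrow> t i \<in> I" "\<And>i. i < n \<Longrightarrow> t i < t (Suc i)"
    by auto
  then have "(\<Sum>i=1..n. \<bar>\<phi> (t i) - \<phi> (t (i - 1))\<bar>) \<le> B" using assms(2) by blast
  moreover have "(\<Sum>i=1..n. \<bar>\<phi> (t i) - \<phi> (t (i - 1))\<bar> powr \<rho>) powr (1 / \<rho>)
      \<le> (\<Sum>i=1..n. \<bar>\<phi> (t i) - \<phi> (t (i - 1))\<bar>)"
    by (rule sum_powr_root_le_sum) (use \<open>1 \<le> \<rho>\<close> in auto)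
  ultimately show "ereal ((\<Sum>i\<in>{1..fst p}. \<bar>\<phi> (snd p i) - \<phi> (snd p (i - 1))\<bar> powr \<rho>) powr (1 / \<rho>))
      \<le> ereal B"
    by (simp add: p)
qed

lemma min_le_of_mult_le_square:
  fixes a b c :: real
  assumes "0 \<le> c" "a * b \<le> c^2"
  shows "min a b \<le> c"
proof (rule ccontr)
  assume "\<not> min a b \<le> c"
  then have "c * c < a * b" using \<open>0 \<le> c\<close> by (intro mult_strict_mono) auto
  with \<open>a * b \<le> c^2\<close> show False by (simp add: power2_eq_square)
qed

lemma abs_min_abs_diff_le:
  "\<bar>min \<bar>a - b\<bar> c - min \<bar>a' - b'\<bar> (c'::real)\<bar> \<le> \<bar>a - a'\<bar> + \<bar>b - b'\<bar> + \<bar>c - c'\<bar>"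
  by (simp add: min_def abs_if)

lemma sum_abs_diff_min_abs_diff_le:
  fixes v q w :: "nat \<Rightarrow> real"
  assumes "\<And>i. 1 \<le> i \<Longrightarrow> i \<le> n \<Longrightarrow> v (i - 1) \<le> v i \<and> q (i - 1) \<le> q i \<and> w i \<le> w (i - 1)"
  shows "(\<Sum>i=1..n. \<bar>min \<bar>v i - q i\<bar> (w i) - min \<bar>v (i - 1) - q (i - 1)\<bar> (w (i - 1))\<bar>)
    \<le> (v n - v 0) + (q n - q 0) + (w 0 - w n)"
proof -
  have "(\<Sum>i=1..n. \<bar>min \<bar>v i - q i\<bar> (w i) - min \<bar>v (i - 1) - q (i - 1)\<bar> (w (i - 1))\<bar>)
      \<le> (\<Sum>i=1..n. (v i - v (i - 1)) + (q i - q (i - 1)) - (w i - w (i - 1)))"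
  proof (rule sum_mono)
    fix i assume "i \<in> {1..n}"
    then show "\<bar>min \<bar>v i - q i\<bar> (w i) - min \<bar>v (i - 1) - q (i - 1)\<bar> (w (i - 1))\<bar>
      \<le> (v i - v (i - 1)) + (q i - q (i - 1)) - (w i - w (i - 1))"
      using abs_min_abs_diff_le[of "v i" "q i" "w i" "v (i - 1)" "q (i - 1)" "w (i - 1)"] assms[of i] by auto
  qed
  also have "\<dots> = (v n - v 0) + (q n - q 0) + (w 0 - w n)"
    using sum_telescope''[of 0 n v] sum_telescope''[of 0 n q] sum_telescope''[of 0 n w]
    by (simp add: sum.distrib sum_subtractf)
  finally show ?thesis .
qed

lemma pvar_min_abs_diff_le_of_bounded:
  fixes v q w :: "real \<Rightarrow> real"
  assumes "1 \<le> \<rho>" and mono: "mono_on I v" "mono_on I q" "antimono_on I w"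
    and \<phi>: "\<And>t. t \<in> I \<Longrightarrow> \<phi> t = min \<bar>v t - q t\<bar> (w t)"
    and bounds: "\<And>t. t \<in> I \<Longrightarrow> v t \<in> {0..a} \<and> q t \<in> {0..b} \<and> w t \<in> {0..c}"
  shows "pvar \<rho> I \<phi> \<le> ereal (a + b + c)"
proof (rule pvar_le_of_sum_abs_diff_le[OF \<open>1 \<le> \<rho>\<close>])
  fix n and t :: "nat \<Rightarrow> real"
  assume tI: "\<And>i. i \<le> n \<Longrightarrow> t i \<in> I" and increasing: "\<And>i. i < n \<Longrightarrow> t i < t (Suc i)"
  have "(\<Sum>i=1..n. \<bar>\<phi> (t i) - \<phi> (t (i - 1))\<bar>)
      = (\<Sum>i=1..n. \<bar>min \<bar>v (t i) - q (t i)\<bar> (w (t i))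
                     - min \<bar>v (t (i - 1)) - q (t (i - 1))\<bar> (w (t (i - 1)))\<bar>)"
  proof (rule sum.cong)
    fix i assume "i \<in> {1..n}"
    then have "t i \<in> I" "t (i - 1) \<in> I" using tI by auto
    then show "\<bar>\<phi> (t i) - \<phi> (t (i - 1))\<bar> = \<bar>min \<bar>v (t i) - q (t i)\<bar> (w (t i))
                     - min \<bar>v (t (i - 1)) - q (t (i - 1))\<bar> (w (t (i - 1)))\<bar>"
      by (simp add: \<phi>)
  qed simp
  also have "\<dots> \<le> (v (t n) - v (t 0)) + (q (t n) - q (t 0)) + (w (t 0) - w (t n))"
  proof (rule sum_abs_diff_min_abs_diff_le[where v="\<lambda>i. v (t i)" and q="\<lambda>i. q (t i)" and w="\<lambda>i. w (t i)"])
    fix i :: nat assume i: "1 \<le> i" "i \<le> n"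
    then have "t (i - 1) \<le> t i" using increasing[of "i - 1"] by fastforce
    moreover have "t (i - 1) \<in> I" "t i \<in> I" using tI i by auto
    ultimately show "v (t (i - 1)) \<le> v (t i) \<and> q (t (i - 1)) \<le> q (t i) \<and> w (t i) \<le> w (t (i - 1))"
      using mono by (auto dest: monotone_onD)
  qed
  also have "\<dots> \<le> a + b + c"
    using bounds[OF tI[of n]] bounds[OF tI[of 0]] by auto
  finally show "(\<Sum>i=1..n. \<bar>\<phi> (t i) - \<phi> (t (i - 1))\<bar>) \<le> a + b + c" .
qed

lemma pvar_min_abs_diff_le:
  fixes v q w :: "real \<Rightarrow> real"
  assumes "1 \<le> \<rho>" and mono: "mono_on I v" "mono_on I q" "antimono_on I w"
    and \<phi>: "\<And>t. t \<in> I \<Longrightarrow> \<phi> t = min \<bar>v t - q t\<bar> (w t)"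
    and bounds: "\<And>t. t \<in> I \<Longrightarrow> 0 \<le> v t \<and> 0 \<le> q t \<and> q t \<le> M \<and> 0 \<le> w t \<and> \<phi> t \<le> M"
  shows "pvar \<rho> I \<phi> \<le> ereal (4 * M)"
proof -
  \<comment> \<open>Truncating \<open>v\<close> at \<open>q + M\<close> and \<open>w\<close> at \<open>M\<close> leaves \<open>\<phi> \<le> M\<close> unchanged.\<close>
  have "pvar \<rho> I \<phi> \<le> ereal (2 * M + M + M)"
  proof (rule pvar_min_abs_diff_le_of_bounded[where v="\<lambda>t. min (v t) (q t + M)" and q=q
        and w="\<lambda>t. min (w t) M"])
    show "mono_on I (\<lambda>t. min (v t) (q t + M))" "antimono_on I (\<lambda>t. min (w t) M)"
      using mono by (auto intro!: monotone_onI min.mono dest: monotone_onD)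
    fix t assume "t \<in> I"
    then show "\<phi> t = min \<bar>min (v t) (q t + M) - q t\<bar> (min (w t) M)"
      "min (v t) (q t + M) \<in> {0..2 * M} \<and> q t \<in> {0..M} \<and> min (w t) M \<in> {0..M}"
      using \<phi>[OF \<open>t \<in> I\<close>] bounds[OF \<open>t \<in> I\<close>] by (auto simp: min_def abs_if)
  qed (use assms in auto)
  then show ?thesis by simp
qed

definition drift_ratio :: "real \<Rightarrow> real \<Rightarrow> real" where
  "drift_ratio x t = x * (exp t - 1) / sqrt (1 - exp (-2*t))"

definition cap_ratio :: "real \<Rightarrow> real \<Rightarrow> real \<Rightarrow> real" where
  "cap_ratio x \<sigma> t = \<sigma> / (1 + x) / sqrt (1 - exp (-2*t))"

lemma sqrt_exp_double_minus_one:
  "sqrt (exp (2*t) - 1) = exp t * sqrt (1 - exp (-2*t))"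
proof -
  have "exp (2*t) - 1 = (exp t)^2 * (1 - exp (-2*t))"
    by (simp add: algebra_simps exp_double[symmetric] exp_add[symmetric])
  then show ?thesis by (simp add: real_sqrt_mult)
qed

lemma exp_minus_one_div_sqrt:
  assumes "0 \<le> t"
  shows "(exp t - 1) / sqrt (1 - exp (-2*t)) = exp t * sqrt ((exp t - 1) / (exp t + 1))"
proof -
  define y where "y = exp t"
  have "1 \<le> y" using assms by (simp add: y_def)
  have "exp (-2*t) = inverse (y^2)"
    by (metis exp_double exp_minus minus_mult_left y_def)
  then have "1 - exp (-2*t) = (y - 1) * (y + 1) / y^2"
    using \<open>1 \<le> y\<close> by (simp add: field_simps power2_eq_square)
  define a where "a = sqrt (y - 1)"
  define b where "b = sqrt (y + 1)"
  have "0 < y" "0 < b" "y - 1 = a * a" using \<open>1 \<le> y\<close> by (simp_all add: a_def b_def)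
  have sqrt_eq: "sqrt (1 - exp (-2*t)) = a * b / y"
    unfolding \<open>1 - exp (-2*t) = _\<close> using \<open>1 \<le> y\<close>
    by (simp add: a_def b_def real_sqrt_mult real_sqrt_divide)
  have "(y - 1) / sqrt (1 - exp (-2*t)) = y * (a / b)"
    unfolding sqrt_eq \<open>y - 1 = a * a\<close> using \<open>0 < y\<close> \<open>0 < b\<close> by (cases "a = 0") (simp_all add: field_simps)
  then show ?thesis by (simp add: y_def a_def b_def real_sqrt_divide)
qed

lemma mono_on_drift_ratio:
  assumes "0 \<le> x"
  shows "mono_on {0..} (drift_ratio x)"
proof (rule mono_onI)
  fix t1 t2 :: real assume "t1 \<in> {0..}" "t2 \<in> {0..}" "t1 \<le> t2"
  define y1 y2 where "y1 = exp t1" and "y2 = exp t2"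
  have "1 \<le> y1" "y1 \<le> y2" using \<open>t1 \<in> {0..}\<close> \<open>t1 \<le> t2\<close> by (simp_all add: y1_def y2_def)
  then have "(y1 - 1) / (y1 + 1) \<le> (y2 - 1) / (y2 + 1)"
    by (simp add: divide_simps algebra_simps)
  then have "y1 * sqrt ((y1 - 1) / (y1 + 1)) \<le> y2 * sqrt ((y2 - 1) / (y2 + 1))"
    using \<open>1 \<le> y1\<close> \<open>y1 \<le> y2\<close> by (intro mult_mono) auto
  moreover have "drift_ratio x t = x * (exp t * sqrt ((exp t - 1) / (exp t + 1)))" if "0 \<le> t" for t
    using exp_minus_one_div_sqrt[OF that] unfolding drift_ratio_def by (metis times_divide_eq_right)
  ultimately show "drift_ratio x t1 \<le> drift_ratio x t2"
    using \<open>t1 \<in> {0..}\<close> \<open>t2 \<in> {0..}\<close> assms by (simp add: y1_def y2_def mult_left_mono)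
qed

lemma antimono_on_cap_ratio:
  assumes "0 \<le> x" "0 \<le> \<sigma>"
  shows "antimono_on {0<..} (cap_ratio x \<sigma>)"
  using assms by (intro monotone_onI) (auto simp: cap_ratio_def intro!: divide_left_mono)

lemma exp_le_three: "t \<le> 1 \<Longrightarrow> exp t \<le> (3::real)"
  using exp_le order_trans[of "exp t" "exp 1" 3] by simp

lemma drift_ratio_mult_cap_ratio_le:
  assumes "0 \<le> x" "0 \<le> \<sigma>" "\<sigma> \<le> 1" "0 < t" "t \<le> 1"
  shows "drift_ratio x t * cap_ratio x \<sigma> t \<le> 3"
proof -
  define y where "y = exp t"
  define g where "g = sqrt (1 - exp (-2*t))"
  have "1 < y" "y \<le> 3" using assms exp_le_three[OF \<open>t \<le> 1\<close>] by (simp_all add: y_def)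
  have "exp (-2*t) = inverse (y^2)"
    by (metis exp_double exp_minus minus_mult_left y_def)
  then have g_square: "g * g = (y - 1) * (y + 1) / y^2"
    using assms \<open>1 < y\<close> by (simp add: g_def field_simps power2_eq_square)
  have "drift_ratio x t * cap_ratio x \<sigma> t = x * \<sigma> / (1 + x) * ((y - 1) / (g * g))"
    unfolding drift_ratio_def cap_ratio_def g_def[symmetric] y_def[symmetric] by (simp add: mult_ac)
  also have "(y - 1) / (g * g) = y^2 / (y + 1)"
    unfolding g_square using \<open>1 < y\<close> less_1_mult[of y y] by (simp add: field_simps power2_eq_square)
  also have "x * \<sigma> / (1 + x) * (y^2 / (y + 1)) \<le> 1 * 3"
  proof (rule mult_mono)
    show "x * \<sigma> / (1 + x) \<le> 1" using assms mult_left_le_one_le[of x \<sigma>] by (simp add: field_simps)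
    have "y * y \<le> 3 * y" using \<open>1 < y\<close> \<open>y \<le> 3\<close> by (intro mult_right_mono) auto
    then have "y^2 \<le> 3 * (y + 1)" by (simp add: power2_eq_square)
    then show "y^2 / (y + 1) \<le> 3" using \<open>1 < y\<close> by (simp add: pos_divide_le_eq)
  qed (use \<open>1 < y\<close> in auto)
  finally show ?thesis by simp
qed

lemma drift_ratio_nonneg: "0 \<le> x \<Longrightarrow> 0 \<le> t \<Longrightarrow> 0 \<le> drift_ratio x t"
  by (simp add: drift_ratio_def)

lemma Fplus_eq:
  assumes "0 < t"
  shows "Fplus x s \<sigma> t = min \<bar>drift_ratio x t + s * exp t\<bar> (cap_ratio x \<sigma> t)"
proof -
  define g where "g = sqrt (1 - exp (-2*t))"
  have "0 < g" using assms by (simp add: g_def)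
  then have "\<bar>x * (exp t - 1) + s * (exp t * g)\<bar> / g = \<bar>x * (exp t - 1) / g + s * exp t\<bar>"
    by (simp add: field_simps)
  then show ?thesis
    using \<open>0 < g\<close>
    unfolding Fplus_def drift_ratio_def cap_ratio_def sqrt_exp_double_minus_one g_def[symmetric]
    by (simp add: min_divide_distrib_right)
qed

lemma Fminus_eq:
  assumes "0 < t"
  shows "Fminus x s \<sigma> t = min \<bar>drift_ratio x t - s * exp t\<bar> (cap_ratio x \<sigma> t)"
proof -
  define g where "g = sqrt (1 - exp (-2*t))"
  have "0 < g" using assms by (simp add: g_def)
  then have "\<bar>x * (exp t - 1) - s * (exp t * g)\<bar> / g = \<bar>x * (exp t - 1) / g - s * exp t\<bar>"
    by (simp add: field_simps)
  then show ?thesis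
    using \<open>0 < g\<close>
    unfolding Fminus_def drift_ratio_def cap_ratio_def sqrt_exp_double_minus_one g_def[symmetric]
    by (simp add: min_divide_distrib_right)
qed

lemma Fminus_nonneg: "0 \<le> x \<Longrightarrow> 0 \<le> \<sigma> \<Longrightarrow> 0 \<le> t \<Longrightarrow> 0 \<le> Fminus x s \<sigma> t"
  by (auto simp: Fminus_def intro!: divide_nonneg_nonneg)

lemma Fminus_le_Fplus:
  assumes "0 \<le> x" "0 \<le> s" "0 < t"
  shows "Fminus x s \<sigma> t \<le> Fplus x s \<sigma> t"
proof -
  have "0 \<le> drift_ratio x t" "0 \<le> s * exp t" using assms by (simp_all add: drift_ratio_nonneg)
  then show ?thesis
    unfolding Fplus_eq[OF \<open>0 < t\<close>] Fminus_eq[OF \<open>0 < t\<close>] by (intro min.mono) auto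
qed

lemma Fplus_le:
  assumes "0 \<le> x" "0 \<le> s" "0 \<le> \<sigma>" "\<sigma> \<le> 1" "0 < t" "t \<le> 1"
  shows "Fplus x s \<sigma> t \<le> 3 * (s + 1)"
proof -
  have "0 \<le> drift_ratio x t" "0 \<le> s * exp t" using assms by (simp_all add: drift_ratio_nonneg)
  then have "Fplus x s \<sigma> t \<le> min (drift_ratio x t) (cap_ratio x \<sigma> t) + s * exp t"
    unfolding Fplus_eq[OF \<open>0 < t\<close>] by (simp add: min_def)
  moreover have "min (drift_ratio x t) (cap_ratio x \<sigma> t) \<le> 2"
    using drift_ratio_mult_cap_ratio_le[OF assms(1,3-6)] by (intro min_le_of_mult_le_square) auto
  moreover have "s * exp t \<le> s * 3"
    using exp_le_three[OF \<open>t \<le> 1\<close>] \<open>0 \<le> s\<close> by (rule mult_left_mono)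
  ultimately show ?thesis by simp
qed

lemma ex_Qs_less:
  assumes "0 \<le> x" "0 \<le> s" "0 < \<sigma>" "\<sigma> \<le> 1"
  shows "\<exists>t\<in>{0<..1}. Qs x s t < \<sigma> / (1 + x)"
proof -
  \<comment> \<open>As \<open>Qs x s t \<le> x (exp t - 1)\<close>, the point \<open>t = ln (1 + c)\<close> works once \<open>x c < \<sigma> / (1 + x)\<close>.\<close>
  define c where "c = \<sigma> / (2 * (1 + x)^2)"
  have "1 \<le> (1 + x)^2" using assms by simp
  then have "\<sigma> \<le> 2 * (1 + x)^2" using assms by linarith
  then have "0 < c" "c \<le> 1" using assms by (simp_all add: c_def pos_divide_le_eq)
  define t where "t = ln (1 + c)"
  have "0 < t" "t \<le> 1"
    using \<open>0 < c\<close> \<open>c \<le> 1\<close> ln_add_one_self_le_self[of c] by (simp_all add: t_def)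
  have "Qs x s t \<le> x * c"
    using \<open>0 < c\<close> \<open>0 < t\<close> assms by (simp add: Qs_def t_def)
  also have "x * c = \<sigma> / (1 + x) * (x / (2 * (1 + x)))"
    using assms by (simp add: c_def field_simps power2_eq_square)
  also have "\<dots> < \<sigma> / (1 + x) * 1"
    using assms by (intro mult_strict_left_mono) (simp_all add: divide_less_eq)
  finally show ?thesis
    using \<open>0 < t\<close> \<open>t \<le> 1\<close> by auto
qed

lemma pvar_Fplus_le:
  assumes "1 \<le> \<rho>" "I \<subseteq> {0<..1}" "0 \<le> x" "0 \<le> s" "0 \<le> \<sigma>" "\<sigma> \<le> 1"
  shows "pvar \<rho> I (Fplus x s \<sigma>) \<le> ereal (12 * (s + 1))"
proof -
  have "pvar \<rho> I (Fplus x s \<sigma>) \<le> ereal (4 * (3 * (s + 1)))"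
  proof (rule pvar_min_abs_diff_le[where v="\<lambda>t. drift_ratio x t + s * exp t" and q="\<lambda>_. 0"])
    show "mono_on I (\<lambda>t. drift_ratio x t + s * exp t)"
    proof (rule mono_onI)
      fix t1 t2 assume "t1 \<in> I" "t2 \<in> I" "t1 \<le> t2"
      then have "drift_ratio x t1 \<le> drift_ratio x t2"
        using assms by (intro mono_onD[OF mono_on_drift_ratio[OF \<open>0 \<le> x\<close>]]) auto
      moreover have "s * exp t1 \<le> s * exp t2" using \<open>t1 \<le> t2\<close> assms by (simp add: mult_left_mono)
      ultimately show "drift_ratio x t1 + s * exp t1 \<le> drift_ratio x t2 + s * exp t2" by simp
    qed
    show "antimono_on I (cap_ratio x \<sigma>)"
      using assms by (intro monotone_on_subset[OF antimono_on_cap_ratio]) auto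
    fix t assume "t \<in> I"
    then have "0 < t" "t \<le> 1" using assms by auto
    then show "Fplus x s \<sigma> t = min \<bar>drift_ratio x t + s * exp t - 0\<bar> (cap_ratio x \<sigma> t)"
      by (simp add: Fplus_eq)
    show "0 \<le> drift_ratio x t + s * exp t \<and> 0 \<le> (0::real) \<and> 0 \<le> 3 * (s + 1) \<and>
        0 \<le> cap_ratio x \<sigma> t \<and> Fplus x s \<sigma> t \<le> 3 * (s + 1)"
      using assms \<open>0 < t\<close> Fplus_le[OF assms(3-6) \<open>0 < t\<close> \<open>t \<le> 1\<close>]
      by (simp add: drift_ratio_nonneg cap_ratio_def)
  qed (simp_all add: assms mono_on_const)
  then show ?thesis by simp
qed

lemma pvar_Fminus_le:
  assumes "1 \<le> \<rho>" "I \<subseteq> {0<..1}" "0 \<le> x" "0 \<le> s" "0 \<le> \<sigma>" "\<sigma> \<le> 1"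
  shows "pvar \<rho> I (Fminus x s \<sigma>) \<le> ereal (12 * (s + 1))"
proof -
  have "pvar \<rho> I (Fminus x s \<sigma>) \<le> ereal (4 * (3 * (s + 1)))"
  proof (rule pvar_min_abs_diff_le[where v="drift_ratio x" and q="\<lambda>t. s * exp t"])
    show "mono_on I (drift_ratio x)"
      using assms by (intro mono_on_subset[OF mono_on_drift_ratio[OF \<open>0 \<le> x\<close>]]) auto
    show "mono_on I (\<lambda>t. s * exp t)"
      using assms by (intro mono_onI mult_left_mono) auto
    show "antimono_on I (cap_ratio x \<sigma>)"
      using assms by (intro monotone_on_subset[OF antimono_on_cap_ratio]) auto
    fix t assume "t \<in> I"
    then have "0 < t" "t \<le> 1" using assms by auto
    then show "Fminus x s \<sigma> t = min \<bar>drift_ratio x t - s * exp t\<bar> (cap_ratio x \<sigma> t)"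
      by (simp add: Fminus_eq)
    have "s * exp t \<le> 3 * (s + 1)"
      using assms exp_le_three[OF \<open>t \<le> 1\<close>] mult_left_mono[of "exp t" 3 s] by simp
    then show "0 \<le> drift_ratio x t \<and> 0 \<le> s * exp t \<and> s * exp t \<le> 3 * (s + 1) \<and>
        0 \<le> cap_ratio x \<sigma> t \<and> Fminus x s \<sigma> t \<le> 3 * (s + 1)"
      using assms \<open>0 < t\<close> \<open>t \<le> 1\<close> Fminus_le_Fplus[of x s t \<sigma>] Fplus_le[of x s \<sigma> t]
      by (simp add: drift_ratio_nonneg cap_ratio_def)
  qed (use assms in simp)
  then show ?thesis by simp
qed

lemma Fplus_Fminus_bounds:
  assumes "0 \<le> x" "0 \<le> s" "1/2 < \<sigma>" "\<sigma> < 1" "1 \<le> \<rho>"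
  shows "(\<forall>t \<in> {0<..Tsig x s \<sigma>}. \<bar>Fplus x s \<sigma> t\<bar> \<le> 12 * (s + 1) \<and> \<bar>Fminus x s \<sigma> t\<bar> \<le> 12 * (s + 1)) \<and>
     pvar \<rho> {0<..Tsig x s \<sigma>} (Fplus x s \<sigma>) \<le> ereal (12 * (s + 1)) \<and>
     pvar \<rho> {0<..Tsig x s \<sigma>} (Fminus x s \<sigma>) \<le> ereal (12 * (s + 1))"
proof (intro conjI ballI)
  have x: "0 \<le> x" and s: "0 \<le> s" and \<sigma>: "0 \<le> \<sigma>" "\<sigma> \<le> 1" "0 < \<sigma> / (1 + x)"
    and \<rho>: "1 \<le> \<rho>" using assms by auto
  have "Tsig x s \<sigma> \<le> 1"
    unfolding Tsig_def using ex_Qs_less[OF x s _ \<sigma>(2)] \<open>0 < \<sigma> / (1 + x)\<close> x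
    by (intro cSup_least) (auto simp: zero_less_divide_iff)
  then have I: "{0<..Tsig x s \<sigma>} \<subseteq> {0<..1}" by auto
  show "pvar \<rho> {0<..Tsig x s \<sigma>} (Fplus x s \<sigma>) \<le> ereal (12 * (s + 1))"
    by (rule pvar_Fplus_le[OF \<rho> I x s \<sigma>(1,2)])
  show "pvar \<rho> {0<..Tsig x s \<sigma>} (Fminus x s \<sigma>) \<le> ereal (12 * (s + 1))"
    by (rule pvar_Fminus_le[OF \<rho> I x s \<sigma>(1,2)])
  fix t assume "t \<in> {0<..Tsig x s \<sigma>}"
  then have "0 < t" "t \<le> 1" using I by auto
  then have "0 \<le> Fminus x s \<sigma> t" "Fminus x s \<sigma> t \<le> Fplus x s \<sigma> t" "Fplus x s \<sigma> t \<le> 3 * (s + 1)"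
    using Fminus_nonneg[OF x \<sigma>(1)] Fminus_le_Fplus[OF x s] Fplus_le[OF x s \<sigma>(1,2)] by simp_all
  then show "\<bar>Fplus x s \<sigma> t\<bar> \<le> 12 * (s + 1)" "\<bar>Fminus x s \<sigma> t\<bar> \<le> 12 * (s + 1)"
    by auto
qed

theorem lemma5p4:
  "\<exists>C::real. \<forall>x s \<sigma> \<rho>. x \<ge> 0 \<and> s > 0 \<and> 1/2 < \<sigma> \<and> \<sigma> < 1 \<and> \<rho> \<ge> 1 \<longrightarrow>
     (\<forall>t \<in> {0<..Tsig x s \<sigma>}. \<bar>Fplus x s \<sigma> t\<bar> \<le> C * (s + 1) \<and> \<bar>Fminus x s \<sigma> t\<bar> \<le> C * (s + 1)) \<and>
     pvar \<rho> {0<..Tsig x s \<sigma>} (Fplus x s \<sigma>) \<le> ereal (C * (s + 1)) \<and>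
     pvar \<rho> {0<..Tsig x s \<sigma>} (Fminus x s \<sigma>) \<le> ereal (C * (s + 1))"
  using Fplus_Fminus_bounds by (intro exI[of _ 12]) auto

end
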